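(* Consider $\ell$ i.i.d. samples from the structural equation model of the context with $N_y\sim\mathcal{N}(0,\sigma_y^2)$, $\sigma_y>0$, and suppose the null hypothesis $H_0:\beta=0$ holds. Let $S_1,\dots,S_m\subseteq\{1,\dots,q\}$, let $\hat\gamma\in\mathbb{R}^q$ be an estimate of $\gamma$ that is held fixed (conditioned upon, not depending on $\mathbf{N}_y$), and let $\pi_1,\dots,\pi_M$ be independent uniformly random permutations of $\{1,\dots,\ell\}$, independent of the data. Let $p$ be the p-value produced by the permutation test described in the context. Then $$\mathbb{P}\big(p\le\alpha\,\big|\,\mathbf{X},\mathbf{W},\gamma,\hat\gamma\big)\le\alpha+\frac{\sqrt{M}\,\|\mathbf{W}(\gamma-\hat\gamma)\|}{2\sigma_y}\quad\text{for all }\alpha\in(0,1).$$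
   Context: Structural equation model: zero-mean mutually independent noises $N_z\in\mathbb{R}^r$, $N_w\in\mathbb{R}^q$, $N_x\in\mathbb{R}^d$, $N_y\in\mathbb{R}$ with diagonal covariances; $Z=N_z$, $W=\mathbf{A}Z+N_w$, $X=\mathbf{B}Z+N_x$, $Y=\beta^\top X+\gamma^\top W+N_y$, with $\mathbf{A}\in\mathbb{R}^{q\times r}$, $\mathbf{B}\in\mathbb{R}^{d\times r}$, $\beta\in\mathbb{R}^d$, $\gamma\in\mathbb{R}^q$. Data: $\ell$ i.i.d. draws $(y_i,x_i,w_i,n_{y,i})$, stacked as $\mathbf{Y}\in\mathbb{R}^\ell$, $\mathbf{X}\in\mathbb{R}^{\ell\times d}$, $\mathbf{W}\in\mathbb{R}^{\ell\times q}$, $\mathbf{N}_y\in\mathbb{R}^\ell$; $\mathbf{W}_S$ denotes the columns of $\mathbf{W}$ indexed by $S$. For a response vector $\mathbf{Y}'\in\mathbb{R}^\ell$ and $S$, $\hat\beta(S;\mathbf{Y}')\in\mathbb{R}^d$ denotes the coefficients of $\mathbf{X}$ in the ordinary least-squares regression of $\mathbf{Y}'$ on $[\mathbf{X},\mathbf{W}_S]$. Stability statistic: $\mathcal{V}(v_1,\dots,v_m)=1-\frac{\|m^{-1}\sum_{j}v_j\|^2}{m^{-1}\sum_j\|v_j\|^2}$. Permutation test: set $\mathcal{V}_0=\mathcal{V}(\hat\beta(S_1;\mathbf{Y}),\dots,\hat\beta(S_m;\mathbf{Y}))$. Let $\hat{\mathbf{N}}=\mathbf{Y}-\mathbf{W}\hat\gamma=(\hat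 n_1,\dots,\hat n_\ell)^\top$ and, for a permutation $\pi$, $\hat{\mathbf{N}}^\pi=(\hat n_{\pi(1)},\dots,\hat n_{\pi(\ell)})^\top$ and $\hat{\mathbf{Y}}(\pi)=\mathbf{W}\hat\gamma+\hat{\mathbf{N}}^\pi$. For $i=1,\dots,M$ set $\mathcal{V}_i=\mathcal{V}(\hat\beta(S_1;\hat{\mathbf{Y}}(\pi_i)),\dots,\hat\beta(S_m;\hat{\mathbf{Y}}(\pi_i)))$. The p-value is $p=\big(\sum_{i=1}^M\mathbf{1}\{\mathcal{V}_i\ge\mathcal{V}_0\}+1\big)/(M+1)$. *)

theory Defs
  imports "HOL-Probability.Probability"
begin

text \<open>The sample index set, the X-coordinates and the W-coordinates are
finite types 'l, 'd, 'q (so ell = CARD('l), d = CARD('d), q = CARD('q)).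
Data matrices are functions: X i k is row i, column k.\<close>

definition mat_vec :: "('l \<Rightarrow> 'c::finite \<Rightarrow> real) \<Rightarrow> ('c \<Rightarrow> real) \<Rightarrow> 'l \<Rightarrow> real" where
  "mat_vec A v = (\<lambda>i. \<Sum>k\<in>UNIV. A i k * v k)"

definition vnorm :: "('a::finite \<Rightarrow> real) \<Rightarrow> real" where
  "vnorm v = sqrt (\<Sum>i\<in>UNIV. (v i)\<^sup>2)"

definition rss :: "('l::finite \<Rightarrow> 'd::finite \<Rightarrow> real) \<Rightarrow> ('l \<Rightarrow> 'q::finite \<Rightarrow> real) \<Rightarrow> 'q set
    \<Rightarrow> ('l \<Rightarrow> real) \<Rightarrow> ('d \<Rightarrow> real) \<Rightarrow> ('q \<Rightarrow> real) \<Rightarrow> real" where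
  "rss X W S Y' b c = (\<Sum>i\<in>UNIV. (Y' i - (\<Sum>k\<in>UNIV. X i k * b k) - (\<Sum>k\<in>S. W i k * c k))\<^sup>2)"

definition ls_sols :: "('l::finite \<Rightarrow> 'd::finite \<Rightarrow> real) \<Rightarrow> ('l \<Rightarrow> 'q::finite \<Rightarrow> real) \<Rightarrow> 'q set
    \<Rightarrow> ('l \<Rightarrow> real) \<Rightarrow> (('d \<Rightarrow> real) \<times> ('q \<Rightarrow> real)) set" where
  "ls_sols X W S Y' = {(b, c). (\<forall>k. k \<notin> S \<longrightarrow> c k = 0) \<and>
      (\<forall>b' c'. (\<forall>k. k \<notin> S \<longrightarrow> c' k = 0) \<longrightarrow> rss X W S Y' b c \<le> rss X W S Y' b' c')}"

text \<open>OLS coefficients of X: the X-part of the (minimum-norm) least-squares solution;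
this is the usual OLS estimate whenever [X, W_S] has full column rank.\<close>
definition ols_beta :: "('l::finite \<Rightarrow> 'd::finite \<Rightarrow> real) \<Rightarrow> ('l \<Rightarrow> 'q::finite \<Rightarrow> real) \<Rightarrow> 'q set
    \<Rightarrow> ('l \<Rightarrow> real) \<Rightarrow> 'd \<Rightarrow> real" where
  "ols_beta X W S Y' = fst (THE bc. bc \<in> ls_sols X W S Y' \<and>
      (\<forall>bc' \<in> ls_sols X W S Y'.
         (\<Sum>k\<in>UNIV. (fst bc k)\<^sup>2) + (\<Sum>k\<in>UNIV. (snd bc k)\<^sup>2)
         \<le> (\<Sum>k\<in>UNIV. (fst bc' k)\<^sup>2) + (\<Sum>k\<in>UNIV. (snd bc' k)\<^sup>2)))"

definition stab :: "(nat \<Rightarrow> 'd::finite \<Rightarrow> real) \<Rightarrow> nat \<Rightarrow> real" where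
  "stab v m = 1 - (\<Sum>k\<in>UNIV. ((1 / real m) * (\<Sum>j<m. v j k))\<^sup>2)
                   / ((1 / real m) * (\<Sum>j<m. \<Sum>k\<in>UNIV. (v j k)\<^sup>2))"

definition perm_Y :: "('l::finite \<Rightarrow> 'q::finite \<Rightarrow> real) \<Rightarrow> ('q \<Rightarrow> real) \<Rightarrow> ('l \<Rightarrow> real)
    \<Rightarrow> ('l \<Rightarrow> 'l) \<Rightarrow> 'l \<Rightarrow> real" where
  "perm_Y W gh Y \<pi> = (\<lambda>i. mat_vec W gh i + (Y (\<pi> i) - mat_vec W gh (\<pi> i)))"

definition perm_pval :: "('l::finite \<Rightarrow> 'd::finite \<Rightarrow> real) \<Rightarrow> ('l \<Rightarrow> 'q::finite \<Rightarrow> real)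
    \<Rightarrow> (nat \<Rightarrow> 'q set) \<Rightarrow> nat \<Rightarrow> ('q \<Rightarrow> real) \<Rightarrow> nat \<Rightarrow> ('l \<Rightarrow> real)
    \<Rightarrow> (nat \<Rightarrow> 'l \<Rightarrow> 'l) \<Rightarrow> real" where
  "perm_pval X W S m gh M Y pis =
     (let V0 = stab (\<lambda>j. ols_beta X W (S j) Y) m;
          V = (\<lambda>i. stab (\<lambda>j. ols_beta X W (S j) (perm_Y W gh Y (pis i))) m)
      in (real (card {i. i < M \<and> V i \<ge> V0}) + 1) / (real M + 1))"

definition gauss_noise :: "real \<Rightarrow> ('l::finite \<Rightarrow> real) measure" where
  "gauss_noise \<sigma> = PiM UNIV (\<lambda>_. density lborel (normal_density 0 \<sigma>))"

definition perm_dist :: "nat \<Rightarrow> (nat \<Rightarrow> 'l::finite \<Rightarrow> 'l) measure" where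
  "perm_dist M = PiM {..<M} (\<lambda>_. measure_pmf (pmf_of_set {\<pi>. \<pi> permutes (UNIV :: 'l set)}))"

end

theory Submission
  imports Defs
begin

text \<open>Write the response as \<open>W \<gamma>h + (N + \<delta>)\<close> with \<open>\<delta> = W (\<gamma> - \<gamma>h)\<close>.
If \<open>\<delta> = 0\<close>, the permuted responses are \<open>W \<gamma>h + N \<circ> \<pi>\<close>. Relabelling the noise by a
uniform random permutation \<open>\<tau>\<close> leaves the i.i.d. Gaussian law of \<open>N\<close> invariant and turns the
\<open>M + 1\<close> statistics into functions of \<open>\<tau>, \<tau> \<circ> \<pi>\<^sub>1, \<dots>, \<tau> \<circ> \<pi>\<^sub>M\<close>, which are
i.i.d. uniform; by exchangeability, at most a fraction \<open>\<alpha>\<close> of them can have upper rank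
\<open>\<le> \<alpha> (M + 1)\<close>, so the test rejects with probability at most \<open>\<alpha>\<close>.
For general \<open>\<delta>\<close> the conditional rejection probability is evaluated at \<open>N + \<delta>\<close> instead of
\<open>N\<close>. The likelihood ratio \<open>L\<close> of this Gaussian shift has \<open>E \<surd>L = exp (- \<parallel>\<delta>\<parallel>\<^sup>2 / (8 \<sigma>\<^sup>2))\<close>,
and the Hellinger estimate \<open>E (L h) - E h \<le> \<surd>(1 - (E \<surd>L)\<^sup>2)\<close> for \<open>0 \<le> h \<le> 1\<close> bounds
the change by \<open>\<parallel>\<delta>\<parallel> / (2 \<sigma>)\<close>.\<close>

section \<open>Ranks of exchangeable statistics\<close>

definition upper_rank :: "('i \<Rightarrow> real) \<Rightarrow> 'i set \<Rightarrow> 'i \<Rightarrow> nat" where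
  "upper_rank v I j = card {i\<in>I. v j \<le> v i}"

lemma card_filter_eq_sum: "finite A \<Longrightarrow> card {x\<in>A. P x} = (\<Sum>x\<in>A. if P x then 1 else 0)"
  by (simp add: sum.If_cases Int_def)

lemma card_upper_rank_le:
  assumes "finite I" "0 \<le> c"
  shows "real (card {j\<in>I. real (upper_rank v I j) \<le> c}) \<le> c"
proof (cases "{j\<in>I. real (upper_rank v I j) \<le> c} = {}")
  case True
  then show ?thesis using assms by (subst True) simp
next
  case False
  define J where "J = {j\<in>I. real (upper_rank v I j) \<le> c}"
  define j0 where "j0 = arg_min_on v J"
  have "finite J" using assms unfolding J_def by simp
  then have "j0 \<in> J" and "\<And>j. j \<in> J \<Longrightarrow> v j0 \<le> v j"
    using arg_min_if_finite[of J v] False unfolding J_def j0_def by (auto simp: not_less)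
  then have "J \<subseteq> {i\<in>I. v j0 \<le> v i}" unfolding J_def by auto
  then have "card J \<le> upper_rank v I j0"
    unfolding upper_rank_def using assms by (intro card_mono) auto
  with \<open>j0 \<in> J\<close> show ?thesis unfolding J_def by auto
qed

lemma upper_rank_comp_permutes:
  assumes "finite I" "t permutes I"
  shows "upper_rank (v \<circ> t) I j = upper_rank v I (t j)"
  unfolding upper_rank_def using assms
  by (simp add: card_filter_eq_sum sum.permute[OF assms(2), of "\<lambda>i. if v (t j) \<le> v i then 1 else 0"])

lemma comp_permutes_in_PiE:
  assumes "t permutes I" "r \<in> PiE I (\<lambda>_. P)"
  shows "r \<circ> t \<in> PiE I (\<lambda>_. P)"
  using assms by (auto simp: PiE_iff permutes_in_image extensional_def permutes_not_in)

lemma card_PiE_comp_permutes: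
  assumes "t permutes I"
  shows "card {r \<in> PiE I (\<lambda>_. P). Q (r \<circ> t)} = card {r \<in> PiE I (\<lambda>_. P). Q r}"
proof (rule bij_betw_same_card[of "\<lambda>r. r \<circ> t"], rule bij_betw_byWitness[where f'="\<lambda>r. r \<circ> inv t"])
  have inv: "inv t permutes I" using permutes_inv[OF assms] .
  have tt: "t \<circ> inv t = id" "inv t \<circ> t = id" using permutes_inv_o[OF assms] by auto
  show "\<forall>r\<in>{r \<in> PiE I (\<lambda>_. P). Q (r \<circ> t)}. r \<circ> t \<circ> inv t = r"
    by (simp add: comp_assoc tt)
  show "\<forall>r\<in>{r \<in> PiE I (\<lambda>_. P). Q r}. r \<circ> inv t \<circ> t = r"
    by (simp add: comp_assoc tt)
  show "(\<lambda>r. r \<circ> t) ` {r \<in> PiE I (\<lambda>_. P). Q (r \<circ> t)} \<subseteq> {r \<in> PiE I (\<lambda>_. P). Q r}"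
    using comp_permutes_in_PiE[OF assms] by auto
  show "(\<lambda>r. r \<circ> inv t) ` {r \<in> PiE I (\<lambda>_. P). Q r} \<subseteq> {r \<in> PiE I (\<lambda>_. P). Q (r \<circ> t)}"
    using comp_permutes_in_PiE[OF inv] by (auto simp: comp_assoc tt)
qed

text \<open>Exchangeability: transposing coordinates \<open>a\<close> and \<open>j\<close> shows that every coordinate is
  equally often of small upper rank, while each family has at most \<open>c\<close> such coordinates.\<close>

lemma card_PiE_upper_rank_le:
  fixes U :: "'a \<Rightarrow> real"
  assumes I: "finite I" "a \<in> I" and P: "finite P" and c: "0 \<le> c"
  shows "real (card I) * real (card {r \<in> PiE I (\<lambda>_. P). real (upper_rank (U \<circ> r) I a) \<le> c})
           \<le> real (card P) ^ card I * c"
proof -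
  define E where "E = PiE I (\<lambda>_. P)"
  define Q where "Q r j \<longleftrightarrow> real (upper_rank (U \<circ> r) I j) \<le> c" for r j
  have "finite E" unfolding E_def using I P by (simp add: finite_PiE)
  have exchange: "card {r\<in>E. Q r j} = card {r\<in>E. Q r a}" if "j \<in> I" for j
  proof -
    have t: "Transposition.transpose a j permutes I" using I that by (intro permutes_swap_id)
    have "card {r\<in>E. Q r j} = card {r\<in>E. Q (r \<circ> Transposition.transpose a j) a}"
      unfolding Q_def comp_assoc[symmetric] upper_rank_comp_permutes[OF I(1) t] by simp
    also have "\<dots> = card {r\<in>E. Q r a}"
      unfolding E_def by (rule card_PiE_comp_permutes[OF t])
    finally show ?thesis .
  qed
  have "card I * card {r\<in>E. Q r a} = (\<Sum>j\<in>I. card {r\<in>E. Q r j})"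
    by (simp only: sum.cong[OF refl exchange] sum_constant of_nat_id)
  also have "\<dots> = (\<Sum>j\<in>I. \<Sum>r\<in>E. if Q r j then 1 else 0)"
    using \<open>finite E\<close> by (simp add: card_filter_eq_sum)
  also have "\<dots> = (\<Sum>r\<in>E. \<Sum>j\<in>I. if Q r j then 1 else 0)"
    by (rule sum.swap)
  also have "\<dots> = (\<Sum>r\<in>E. card {j\<in>I. Q r j})"
    using I(1) by (simp add: card_filter_eq_sum)
  finally have "real (card I) * real (card {r\<in>E. Q r a}) = (\<Sum>r\<in>E. real (card {j\<in>I. Q r j}))"
    by (simp only: of_nat_mult[symmetric] of_nat_sum[symmetric])
  also have "\<dots> \<le> (\<Sum>r\<in>E. c)"
    unfolding Q_def using I(1) c by (intro sum_mono card_upper_rank_le)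
  also have "\<dots> = real (card P) ^ card I * c"
    unfolding E_def using I by (simp add: card_PiE)
  finally show ?thesis unfolding E_def Q_def .
qed

definition relabelled_family :: "nat \<Rightarrow> ('a \<Rightarrow> 'a) \<Rightarrow> (nat \<Rightarrow> 'a \<Rightarrow> 'a) \<Rightarrow> nat \<Rightarrow> 'a \<Rightarrow> 'a" where
  "relabelled_family M \<tau> pis i = (if i \<le> M then case i of 0 \<Rightarrow> \<tau> | Suc k \<Rightarrow> \<tau> \<circ> pis k else undefined)"

lemma relabelled_family_in_PiE:
  assumes "\<tau> permutes A" "pis \<in> PiE {..<M} (\<lambda>_. {\<pi>. \<pi> permutes A})"
  shows "relabelled_family M \<tau> pis \<in> PiE {..M} (\<lambda>_. {\<pi>. \<pi> permutes A})"
  using assms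
  by (auto simp: relabelled_family_def PiE_iff extensional_def permutes_compose split: nat.splits)

lemma inj_on_relabelled_family:
  "inj_on (\<lambda>(\<tau>, pis). relabelled_family M \<tau> pis) ({\<tau>. \<tau> permutes A} \<times> PiE {..<M} (\<lambda>_. {\<pi>. \<pi> permutes A}))"
proof (rule inj_onI, clarsimp)
  fix \<tau> pis \<tau>' pis'
  assume \<tau>: "\<tau> permutes A" and pis: "pis \<in> PiE {..<M} (\<lambda>_. {\<pi>. \<pi> permutes A})"
    and pis': "pis' \<in> PiE {..<M} (\<lambda>_. {\<pi>. \<pi> permutes A})"
    and eq: "relabelled_family M \<tau> pis = relabelled_family M \<tau>' pis'"
  have "\<tau> = \<tau>'" using fun_cong[OF eq, of 0] by (simp add: relabelled_family_def)
  have "pis i = pis' i" for i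
  proof (cases "i < M")
    case True
    then have "\<tau> \<circ> pis i = \<tau> \<circ> pis' i"
      using fun_cong[OF eq, of "Suc i"] \<open>\<tau> = \<tau>'\<close> by (simp add: relabelled_family_def)
    then show ?thesis using permutes_inj[OF \<tau>] by (simp add: fun_eq_iff inj_def)
  next
    case False
    then show ?thesis using PiE_arb[OF pis] PiE_arb[OF pis'] by simp
  qed
  with \<open>\<tau> = \<tau>'\<close> show "\<tau> = \<tau>' \<and> pis = pis'" by blast
qed

lemma upper_rank_relabelled_family:
  "upper_rank (U \<circ> relabelled_family M \<tau> pis) {..M} 0 = Suc (card {i. i < M \<and> U \<tau> \<le> U (\<tau> \<circ> pis i)})"
proof -
  have "{i\<in>{..M}. U (relabelled_family M \<tau> pis 0) \<le> U (relabelled_family M \<tau> pis i)}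
      = insert 0 (Suc ` {i. i < M \<and> U \<tau> \<le> U (\<tau> \<circ> pis i)})"
    by (auto simp: relabelled_family_def image_iff Suc_le_eq split: nat.splits) (metis not0_implies_Suc)
  then show ?thesis unfolding upper_rank_def by (simp add: card_image)
qed

text \<open>Prepending \<open>\<tau>\<close> to the relabelled permutations \<open>\<tau> \<circ> \<pi>\<^sub>i\<close> injects the pairs
  \<open>(\<tau>, \<pi>)\<close> counted on the left into the families of \<open>M + 1\<close> permutations whose first
  member has upper rank at most \<open>c\<close>.\<close>

lemma sum_card_relabelled_rank_le:
  fixes U :: "('a \<Rightarrow> 'a) \<Rightarrow> real"
  assumes "finite A" "0 \<le> c"
  defines "P \<equiv> {\<pi>. \<pi> permutes A}"
  shows "(real M + 1) * (\<Sum>\<tau>\<in>P. real (card {pis \<in> PiE {..<M} (\<lambda>_. P).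
             real (card {i. i < M \<and> U \<tau> \<le> U (\<tau> \<circ> pis i)}) + 1 \<le> c}))
         \<le> real (card P) ^ (M + 1) * c"
proof -
  define B where "B \<tau> = {pis \<in> PiE {..<M} (\<lambda>_. P). real (card {i. i < M \<and> U \<tau> \<le> U (\<tau> \<circ> pis i)}) + 1 \<le> c}"
    for \<tau>
  define R where "R = {r \<in> PiE {..M} (\<lambda>_. P). real (upper_rank (U \<circ> r) {..M} 0) \<le> c}"
  have "finite P" unfolding P_def using assms(1) by (rule finite_permutations)
  have "inj_on (\<lambda>(\<tau>, pis). relabelled_family M \<tau> pis) (Sigma P B)"
    by (rule inj_on_subset[OF inj_on_relabelled_family]) (auto simp: P_def B_def)
  moreover have "(\<lambda>(\<tau>, pis). relabelled_family M \<tau> pis) ` Sigma P B \<subseteq> R"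
  proof clarify
    fix \<tau> pis assume "\<tau> \<in> P" "pis \<in> B \<tau>"
    then have "relabelled_family M \<tau> pis \<in> PiE {..M} (\<lambda>_. P)"
      unfolding P_def B_def by (intro relabelled_family_in_PiE) auto
    moreover have "real (upper_rank (U \<circ> relabelled_family M \<tau> pis) {..M} 0) \<le> c"
      using \<open>pis \<in> B \<tau>\<close> by (simp add: B_def upper_rank_relabelled_family)
    ultimately show "relabelled_family M \<tau> pis \<in> R" unfolding R_def by blast
  qed
  moreover have "finite R" using \<open>finite P\<close> unfolding R_def by (simp add: finite_PiE)
  ultimately have "card (Sigma P B) \<le> card R" by (rule card_inj_on_le)
  have "card (Sigma P B) = (\<Sum>\<tau>\<in>P. card (B \<tau>))"
    using \<open>finite P\<close> by (intro card_SigmaI) (auto simp: B_def intro: finite_subset[OF _ finite_PiE[of "{..<M}"]])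
  then have "(real M + 1) * (\<Sum>\<tau>\<in>P. real (card (B \<tau>))) = (real M + 1) * real (card (Sigma P B))"
    by simp
  also have "\<dots> \<le> real (card {..M}) * real (card R)"
    using \<open>card (Sigma P B) \<le> card R\<close> by (simp add: add.commute mult_left_mono)
  also have "\<dots> \<le> real (card P) ^ card {..M} * c"
    unfolding R_def using \<open>finite P\<close> assms(2) by (intro card_PiE_upper_rank_le) auto
  finally show ?thesis unfolding B_def by simp
qed

section \<open>Uniform random permutations\<close>

lemma space_perm_dist: "space (perm_dist M :: (nat \<Rightarrow> 'l::finite \<Rightarrow> 'l) measure) = PiE {..<M} (\<lambda>_. UNIV)"
  unfolding perm_dist_def by (simp add: space_PiM)

lemma prob_space_perm_dist: "prob_space (perm_dist M)"
  unfolding perm_dist_def by (intro prob_space_PiM prob_space_measure_pmf)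

lemma emeasure_perm_dist_singleton:
  fixes x :: "nat \<Rightarrow> 'l::finite \<Rightarrow> 'l"
  assumes "x \<in> space (perm_dist M)"
  shows "{x} \<in> sets (perm_dist M)"
    and "emeasure (perm_dist M) {x} = (\<Prod>i<M. pmf (pmf_of_set {\<pi>. \<pi> permutes UNIV}) (x i))"
proof -
  have "{x} = PiE {..<M} (\<lambda>i. {x i})"
    using assms by (intro PiE_singleton[symmetric]) (simp add: space_perm_dist PiE_iff)
  then show "{x} \<in> sets (perm_dist M)"
    unfolding perm_dist_def by (simp add: sets_PiM_I_finite)
  interpret product_prob_space "\<lambda>_::nat. measure_pmf (pmf_of_set {\<pi>::'l \<Rightarrow> 'l. \<pi> permutes UNIV})"
    by (intro product_prob_spaceI prob_space_measure_pmf)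
  show "emeasure (perm_dist M) {x} = (\<Prod>i<M. pmf (pmf_of_set {\<pi>. \<pi> permutes UNIV}) (x i))"
    unfolding \<open>{x} = PiE {..<M} (\<lambda>i. {x i})\<close> perm_dist_def
    by (simp add: emeasure_PiM emeasure_pmf_single prod_ennreal)
qed

lemma measure_perm_dist:
  fixes B :: "(nat \<Rightarrow> 'l::finite \<Rightarrow> 'l) set"
  defines "P \<equiv> {\<pi>. \<pi> permutes (UNIV :: 'l set)}"
  assumes B: "B \<subseteq> space (perm_dist M)"
  shows "measure (perm_dist M) B = real (card (B \<inter> PiE {..<M} (\<lambda>_. P))) / real (card P) ^ M"
proof -
  interpret prob_space "perm_dist M :: (nat \<Rightarrow> 'l \<Rightarrow> 'l) measure" by (rule prob_space_perm_dist)
  have "finite P" "P \<noteq> {}" unfolding P_def by (auto intro: permutes_id)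
  have "finite B"
    using B by (rule finite_subset) (simp add: space_perm_dist finite_PiE)
  have "measure (perm_dist M) B = (\<Sum>x\<in>B. measure (perm_dist M) {x})"
    using \<open>finite B\<close> B emeasure_perm_dist_singleton(1)
    by (intro measure_eq_sum_singleton) (auto simp: emeasure_eq_measure)
  also have "\<dots> = (\<Sum>x\<in>B. if x \<in> PiE {..<M} (\<lambda>_. P) then 1 / real (card P) ^ M else 0)"
  proof (rule sum.cong[OF refl])
    fix x assume "x \<in> B"
    then have x: "x \<in> PiE {..<M} (\<lambda>_. UNIV)" using B space_perm_dist by blast
    have "measure (perm_dist M) {x} = (\<Prod>i<M. indicator P (x i) / real (card P))"
      using emeasure_perm_dist_singleton(2)[of x M] \<open>x \<in> B\<close> B \<open>finite P\<close> \<open>P \<noteq> {}\<close>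
      by (auto simp: emeasure_eq_measure P_def prod_nonneg)
    also have "\<dots> = (if x \<in> PiE {..<M} (\<lambda>_. P) then 1 / real (card P) ^ M else 0)"
      using x by (auto simp: prod_dividef PiE_iff indicator_def)
    finally show "measure (perm_dist M) {x} = \<dots>" .
  qed
  also have "\<dots> = real (card (B \<inter> PiE {..<M} (\<lambda>_. P))) / real (card P) ^ M"
    using \<open>finite B\<close> by (simp add: sum.If_cases)
  finally show ?thesis .
qed

section \<open>Gaussian noise and its shifts\<close>

lemma prob_space_gauss_noise: "0 < \<sigma> \<Longrightarrow> prob_space (gauss_noise \<sigma>)"
  unfolding gauss_noise_def by (intro prob_space_PiM prob_space_normal_density)

lemma space_gauss_noise: "space (gauss_noise \<sigma>) = UNIV"
  unfolding gauss_noise_def by (simp add: space_PiM)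

lemma sets_gauss_noise: "sets (gauss_noise \<sigma> :: ('l::finite \<Rightarrow> real) measure) = sets (PiM UNIV (\<lambda>_::'l. lborel))"
  unfolding gauss_noise_def by (intro sets_PiM_cong) simp_all

lemma normal_density_mult_exp:
  assumes "0 < \<sigma>"
  shows "normal_density 0 \<sigma> x * exp (a * x) = exp (a\<^sup>2 * \<sigma>\<^sup>2 / 2) * normal_density (a * \<sigma>\<^sup>2) \<sigma> x"
proof -
  have "- (x - 0)\<^sup>2 / (2 * \<sigma>\<^sup>2) + a * x = a\<^sup>2 * \<sigma>\<^sup>2 / 2 + - (x - a * \<sigma>\<^sup>2)\<^sup>2 / (2 * \<sigma>\<^sup>2)"
    using assms by (simp add: field_simps power2_eq_square)
  then show ?thesis
    unfolding normal_density_def by (simp add: exp_add[symmetric] mult_ac)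
qed

lemma normal_density_tilt:
  assumes "0 < \<sigma>"
  shows "normal_density 0 \<sigma> x * exp (d / \<sigma>\<^sup>2 * x - d\<^sup>2 / (2 * \<sigma>\<^sup>2)) = normal_density d \<sigma> x"
proof -
  have "(d / \<sigma>\<^sup>2)\<^sup>2 * \<sigma>\<^sup>2 / 2 = d\<^sup>2 / (2 * \<sigma>\<^sup>2)" "d / \<sigma>\<^sup>2 * \<sigma>\<^sup>2 = d"
    using assms by (simp_all add: power2_eq_square)
  then show ?thesis
    using normal_density_mult_exp[OF assms, of x "d / \<sigma>\<^sup>2"] by (simp add: exp_diff mult.commute)
qed

lemma
  assumes "0 < \<sigma>"
  shows integrable_normal_exp_linear: "integrable (density lborel (normal_density 0 \<sigma>)) (\<lambda>x. exp (a * x))"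
    and integral_normal_exp_linear:
      "(\<integral>x. exp (a * x) \<partial>density lborel (normal_density 0 \<sigma>)) = exp (a\<^sup>2 * \<sigma>\<^sup>2 / 2)"
  using normal_density_mult_exp[OF assms]
  by (simp_all add: integrable_density integral_density assms)

lemma emeasure_normal_shift:
  assumes "0 < \<sigma>" and A: "A \<in> sets borel"
  shows "emeasure (density lborel (normal_density 0 \<sigma>)) {x. x + d \<in> A}
       = emeasure (density lborel (normal_density d \<sigma>)) A"
proof -
  have "emeasure (density lborel (normal_density d \<sigma>)) A
      = (\<integral>\<^sup>+ y. ennreal (normal_density d \<sigma> y) * indicator A y \<partial>distr lborel borel ((+) d))"
    using A by (subst emeasure_density) (auto simp: lborel_distr_plus)
  also have "\<dots> = (\<integral>\<^sup>+ x. ennreal (normal_density 0 \<sigma> x) * indicator {x. x + d \<in> A} x \<partial>lborel)"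
    using A by (subst nn_integral_distr) (auto simp: normal_density_def indicator_def add.commute)
  also have "\<dots> = emeasure (density lborel (normal_density 0 \<sigma>)) {x. x + d \<in> A}"
    using A by (subst emeasure_density) auto
  finally show ?thesis ..
qed

lemma nn_integral_normal_tilt:
  assumes "0 < \<sigma>" and A: "A \<in> sets borel"
  shows "(\<integral>\<^sup>+ x. ennreal (exp (d / \<sigma>\<^sup>2 * x - d\<^sup>2 / (2 * \<sigma>\<^sup>2))) * indicator A x
            \<partial>density lborel (normal_density 0 \<sigma>))
       = emeasure (density lborel (normal_density d \<sigma>)) A"
proof -
  have "ennreal (normal_density 0 \<sigma> x) * ennreal (exp (d / \<sigma>\<^sup>2 * x - d\<^sup>2 / (2 * \<sigma>\<^sup>2)))
        = ennreal (normal_density d \<sigma> x)" for x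
    using normal_density_tilt[OF assms(1)] by (simp add: ennreal_mult'[symmetric])
  then show ?thesis
    using A by (subst nn_integral_density, simp_all, subst emeasure_density)
      (simp_all add: mult.assoc[symmetric])
qed

lemma measurable_gauss_noise_permute:
  "(\<lambda>n. n \<circ> \<tau>) \<in> measurable (gauss_noise \<sigma>) (gauss_noise \<sigma> :: ('l::finite \<Rightarrow> real) measure)"
  unfolding gauss_noise_def comp_def
  by (auto intro!: measurable_PiM_single' measurable_component_singleton simp: space_PiM)

lemma measurable_gauss_noise_shift:
  "(\<lambda>n i. n i + \<delta> i) \<in> measurable (gauss_noise \<sigma>) (gauss_noise \<sigma> :: ('l::finite \<Rightarrow> real) measure)"
  unfolding gauss_noise_def by (rule measurable_PiM_single') (auto simp: space_PiM)

lemma integral_gauss_noise_permute: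
  fixes h :: "('l::finite \<Rightarrow> real) \<Rightarrow> real"
  assumes "0 < \<sigma>" "\<tau> permutes UNIV" "h \<in> borel_measurable (gauss_noise \<sigma>)"
  shows "(\<integral>n. h (n \<circ> \<tau>) \<partial>gauss_noise \<sigma>) = (\<integral>n. h n \<partial>gauss_noise \<sigma>)"
proof -
  define N0 where "N0 = density lborel (normal_density 0 \<sigma>)"
  have "distr (PiM UNIV (\<lambda>_. N0)) (PiM UNIV (\<lambda>i. (\<lambda>_::'l. N0) (\<tau> i))) (\<lambda>n. \<lambda>i\<in>UNIV. n (\<tau> i))
        = PiM UNIV (\<lambda>i. (\<lambda>_::'l. N0) (\<tau> i))"
    using assms by (intro distr_PiM_reindex) (auto simp: N0_def prob_space_normal_density permutes_inj)
  then have "distr (gauss_noise \<sigma>) (gauss_noise \<sigma>) (\<lambda>n. n \<circ> \<tau>) = gauss_noise \<sigma>"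
    unfolding gauss_noise_def N0_def[symmetric] by (simp add: comp_def restrict_UNIV)
  then show ?thesis
    using integral_distr[OF measurable_gauss_noise_permute[of \<tau>] assms(3)] by simp
qed

lemma
  fixes \<delta> :: "'l::finite \<Rightarrow> real"
  assumes "0 < \<sigma>"
  shows integrable_gauss_noise_exp_linear:
      "integrable (gauss_noise \<sigma>) (\<lambda>n. exp (s * (\<Sum>i\<in>UNIV. \<delta> i * n i)))"
    and integral_gauss_noise_exp_linear:
      "(\<integral>n. exp (s * (\<Sum>i\<in>UNIV. \<delta> i * n i)) \<partial>gauss_noise \<sigma>) = exp (s\<^sup>2 * \<sigma>\<^sup>2 / 2 * (\<Sum>i\<in>UNIV. (\<delta> i)\<^sup>2))"
proof -
  define N0 where "N0 = density lborel (normal_density 0 \<sigma>)"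
  interpret product_prob_space "\<lambda>_::'l. N0"
    unfolding N0_def using assms by (intro product_prob_spaceI prob_space_normal_density)
  have prod: "exp (s * (\<Sum>i\<in>UNIV. \<delta> i * n i)) = (\<Prod>i\<in>UNIV. exp (s * \<delta> i * n i))" for n
    by (simp add: sum_distrib_left exp_sum mult.assoc)
  show "integrable (gauss_noise \<sigma>) (\<lambda>n. exp (s * (\<Sum>i\<in>UNIV. \<delta> i * n i)))"
    unfolding prod gauss_noise_def N0_def[symmetric]
    by (intro product_integrable_prod) (auto simp: N0_def integrable_normal_exp_linear[OF assms])
  have "(\<integral>n. exp (s * (\<Sum>i\<in>UNIV. \<delta> i * n i)) \<partial>gauss_noise \<sigma>) = (\<Prod>i\<in>UNIV. exp ((s * \<delta> i)\<^sup>2 * \<sigma>\<^sup>2 / 2))"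
    unfolding prod gauss_noise_def N0_def[symmetric]
    by (subst product_integral_prod)
      (auto simp: N0_def integrable_normal_exp_linear[OF assms] integral_normal_exp_linear[OF assms])
  also have "\<dots> = exp (s\<^sup>2 * \<sigma>\<^sup>2 / 2 * (\<Sum>i\<in>UNIV. (\<delta> i)\<^sup>2))"
    by (simp add: exp_sum[symmetric] sum_distrib_left power_mult_distrib mult_ac)
  finally show "(\<integral>n. exp (s * (\<Sum>i\<in>UNIV. \<delta> i * n i)) \<partial>gauss_noise \<sigma>) = exp (s\<^sup>2 * \<sigma>\<^sup>2 / 2 * (\<Sum>i\<in>UNIV. (\<delta> i)\<^sup>2))" .
qed

definition gauss_likelihood_ratio :: "real \<Rightarrow> ('l::finite \<Rightarrow> real) \<Rightarrow> ('l \<Rightarrow> real) \<Rightarrow> real" where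
  "gauss_likelihood_ratio \<sigma> \<delta> n = exp ((\<Sum>i\<in>UNIV. \<delta> i * n i) / \<sigma>\<^sup>2 - (\<Sum>i\<in>UNIV. (\<delta> i)\<^sup>2) / (2 * \<sigma>\<^sup>2))"

lemma gauss_likelihood_ratio_eq_prod:
  "gauss_likelihood_ratio \<sigma> \<delta> n = (\<Prod>i\<in>UNIV. exp (\<delta> i / \<sigma>\<^sup>2 * n i - (\<delta> i)\<^sup>2 / (2 * \<sigma>\<^sup>2)))"
  unfolding gauss_likelihood_ratio_def by (simp add: exp_sum[symmetric] sum_subtractf sum_divide_distrib)

lemma borel_measurable_gauss_likelihood_ratio:
  "gauss_likelihood_ratio \<sigma> \<delta> \<in> borel_measurable (gauss_noise \<sigma>)"
  unfolding gauss_likelihood_ratio_def[abs_def] gauss_noise_def by measurable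

lemma distr_gauss_noise_shift:
  fixes \<delta> :: "'l::finite \<Rightarrow> real"
  assumes "0 < \<sigma>"
  defines "\<nu> \<equiv> PiM UNIV (\<lambda>i. density lborel (normal_density (\<delta> i) \<sigma>))"
  shows "distr (gauss_noise \<sigma>) \<nu> (\<lambda>n i. n i + \<delta> i) = \<nu>"
proof -
  define N0 where "N0 = density lborel (normal_density 0 \<sigma>)"
  define Nd where "Nd i = density lborel (normal_density (\<delta> i) \<sigma>)" for i
  interpret P0: product_prob_space "\<lambda>_::'l. N0"
    unfolding N0_def using assms by (intro product_prob_spaceI prob_space_normal_density)
  interpret P\<delta>: product_prob_space Nd
    unfolding Nd_def using assms by (intro product_prob_spaceI prob_space_normal_density)
  have shift: "(\<lambda>n i. n i + \<delta> i) \<in> measurable (gauss_noise \<sigma>) \<nu>"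
    unfolding gauss_noise_def \<nu>_def by (rule measurable_PiM_single') (auto simp: space_PiM)
  show ?thesis
    unfolding \<nu>_def Nd_def[symmetric]
  proof (rule P\<delta>.PiM_eqI)
    fix A assume A: "\<And>i. i \<in> UNIV \<Longrightarrow> A i \<in> sets (Nd i)"
    then have "A i \<in> sets borel" for i by (simp add: Nd_def)
    have "(\<lambda>n i. n i + \<delta> i) -` PiE UNIV A \<inter> space (gauss_noise \<sigma>) = PiE UNIV (\<lambda>i. {x. x + \<delta> i \<in> A i})"
      by (auto simp: PiE_iff space_gauss_noise)
    then have "emeasure (distr (gauss_noise \<sigma>) (PiM UNIV Nd) (\<lambda>n i. n i + \<delta> i)) (PiE UNIV A)
        = emeasure (PiM UNIV (\<lambda>_. N0)) (PiE UNIV (\<lambda>i. {x. x + \<delta> i \<in> A i}))"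
      using shift A unfolding \<nu>_def Nd_def[symmetric]
      by (subst emeasure_distr) (auto simp: gauss_noise_def N0_def intro!: sets_PiM_I_finite)
    also have "\<dots> = (\<Prod>i\<in>UNIV. emeasure (Nd i) (A i))"
      using \<open>\<And>i. A i \<in> sets borel\<close> assms
      by (subst P0.emeasure_PiM) (auto simp: N0_def Nd_def emeasure_normal_shift)
    finally show "emeasure (distr (gauss_noise \<sigma>) (PiM UNIV Nd) (\<lambda>n i. n i + \<delta> i)) (PiE UNIV A)
        = (\<Prod>i\<in>UNIV. emeasure (Nd i) (A i))" .
  qed simp_all
qed

lemma density_gauss_likelihood_ratio:
  fixes \<delta> :: "'l::finite \<Rightarrow> real"
  assumes "0 < \<sigma>"
  shows "density (gauss_noise \<sigma>) (gauss_likelihood_ratio \<sigma> \<delta>)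
       = PiM UNIV (\<lambda>i. density lborel (normal_density (\<delta> i) \<sigma>))"
proof -
  define N0 where "N0 = density lborel (normal_density 0 \<sigma>)"
  define Nd where "Nd i = density lborel (normal_density (\<delta> i) \<sigma>)" for i
  define l where "l i x = exp (\<delta> i / \<sigma>\<^sup>2 * x - (\<delta> i)\<^sup>2 / (2 * \<sigma>\<^sup>2))" for i x
  interpret P0: product_prob_space "\<lambda>_::'l. N0"
    unfolding N0_def using assms by (intro product_prob_spaceI prob_space_normal_density)
  interpret P\<delta>: product_prob_space Nd
    unfolding Nd_def using assms by (intro product_prob_spaceI prob_space_normal_density)
  show ?thesis
    unfolding Nd_def[symmetric]
  proof (rule P\<delta>.PiM_eqI)
    show "sets (density (gauss_noise \<sigma>) (gauss_likelihood_ratio \<sigma> \<delta>)) = sets (PiM UNIV Nd)"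
      by (simp add: sets_gauss_noise Nd_def cong: sets_PiM_cong)
    fix A assume "\<And>i. i \<in> UNIV \<Longrightarrow> A i \<in> sets (Nd i)"
    then have A: "A i \<in> sets borel" for i by (simp add: Nd_def)
    have "emeasure (density (gauss_noise \<sigma>) (gauss_likelihood_ratio \<sigma> \<delta>)) (PiE UNIV A)
        = (\<integral>\<^sup>+ n. ennreal (gauss_likelihood_ratio \<sigma> \<delta> n) * indicator (PiE UNIV A) n \<partial>gauss_noise \<sigma>)"
      using measurable_compose[OF borel_measurable_gauss_likelihood_ratio measurable_ennreal] A
      by (intro emeasure_density) (auto simp: sets_gauss_noise intro!: sets_PiM_I_finite)
    also have "\<dots> = (\<integral>\<^sup>+ n. (\<Prod>i\<in>UNIV. ennreal (l i (n i)) * indicator (A i) (n i)) \<partial>PiM UNIV (\<lambda>_. N0))"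
    proof -
      have "(indicator (PiE UNIV A) n :: ennreal) = (\<Prod>i\<in>UNIV. indicator (A i) (n i))" for n
        by (cases "\<forall>i. n i \<in> A i") (auto simp: indicator_def PiE_iff intro!: prod_zero)
      then show ?thesis
        unfolding gauss_likelihood_ratio_eq_prod l_def gauss_noise_def N0_def
        by (simp add: prod_ennreal prod.distrib)
    qed
    also have "\<dots> = (\<Prod>i\<in>UNIV. \<integral>\<^sup>+ x. ennreal (l i x) * indicator (A i) x \<partial>N0)"
      using A by (intro P0.product_nn_integral_prod) (auto simp: N0_def l_def)
    also have "\<dots> = (\<Prod>i\<in>UNIV. emeasure (Nd i) (A i))"
      using A assms unfolding N0_def Nd_def l_def by (intro prod.cong refl nn_integral_normal_tilt)
    finally show "emeasure (density (gauss_noise \<sigma>) (gauss_likelihood_ratio \<sigma> \<delta>)) (PiE UNIV A)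
        = (\<Prod>i\<in>UNIV. emeasure (Nd i) (A i))" .
  qed simp
qed

lemma integral_gauss_noise_shift:
  fixes h :: "('l::finite \<Rightarrow> real) \<Rightarrow> real"
  assumes "0 < \<sigma>" and h: "h \<in> borel_measurable (gauss_noise \<sigma>)"
  shows "(\<integral>n. h (\<lambda>i. n i + \<delta> i) \<partial>gauss_noise \<sigma>) = (\<integral>n. gauss_likelihood_ratio \<sigma> \<delta> n * h n \<partial>gauss_noise \<sigma>)"
proof -
  define \<nu> where "\<nu> = PiM UNIV (\<lambda>i. density lborel (normal_density (\<delta> i) \<sigma>))"
  have density: "density (gauss_noise \<sigma>) (gauss_likelihood_ratio \<sigma> \<delta>) = \<nu>"
    unfolding \<nu>_def using assms(1) by (rule density_gauss_likelihood_ratio)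
  have "(\<lambda>n i. n i + \<delta> i) \<in> measurable (gauss_noise \<sigma>) \<nu>" "h \<in> borel_measurable \<nu>"
    using measurable_gauss_noise_shift h unfolding density[symmetric] by simp_all
  then have "(\<integral>n. h (\<lambda>i. n i + \<delta> i) \<partial>gauss_noise \<sigma>) = integral\<^sup>L (distr (gauss_noise \<sigma>) \<nu> (\<lambda>n i. n i + \<delta> i)) h"
    by (simp add: integral_distr)
  also have "\<dots> = integral\<^sup>L (density (gauss_noise \<sigma>) (gauss_likelihood_ratio \<sigma> \<delta>)) h"
    unfolding density \<nu>_def using assms(1) by (simp add: distr_gauss_noise_shift)
  also have "\<dots> = (\<integral>n. gauss_likelihood_ratio \<sigma> \<delta> n * h n \<partial>gauss_noise \<sigma>)"
    using h borel_measurable_gauss_likelihood_ratio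
    by (subst integral_density) (auto simp: gauss_likelihood_ratio_def)
  finally show ?thesis .
qed

text \<open>Pointwise form of the Hellinger bound: at \<open>r = \<surd>L\<close> the right-hand side only
  involves \<open>L\<close> and \<open>\<surd>L\<close>, whose expectations are known.\<close>

lemma bounded_mult_sq_sub_one_le:
  fixes h r t :: real
  assumes "0 \<le> h" "h \<le> 1" "0 \<le> r" "0 < t"
  shows "h * (r\<^sup>2 - 1) \<le> (r\<^sup>2 - 1) / 2 + t / 4 * (r - 1)\<^sup>2 + (r + 1)\<^sup>2 / (4 * t)"
proof -
  have "\<bar>r\<^sup>2 - 1\<bar> = \<bar>r - 1\<bar> * (r + 1)"
  proof -
    have "r\<^sup>2 - 1 = (r - 1) * (r + 1)"
      by (simp add: power2_eq_square algebra_simps)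
    then show ?thesis using assms by (simp add: abs_mult)
  qed
  have "h * (r\<^sup>2 - 1) = (h - 1/2) * (r\<^sup>2 - 1) + (r\<^sup>2 - 1) / 2"
    by (simp add: field_simps)
  also have "(h - 1/2) * (r\<^sup>2 - 1) \<le> \<bar>h - 1/2\<bar> * \<bar>r\<^sup>2 - 1\<bar>"
    by (metis abs_ge_self abs_mult)
  also have "\<dots> \<le> 1/2 * (\<bar>r - 1\<bar> * (r + 1))"
    unfolding \<open>\<bar>r\<^sup>2 - 1\<bar> = _\<close> using assms by (intro mult_right_mono) (auto simp: abs_if)
  also have "\<dots> \<le> t / 4 * (r - 1)\<^sup>2 + (r + 1)\<^sup>2 / (4 * t)"
  proof -
    have "0 \<le> (t * \<bar>r - 1\<bar> - (r + 1))\<^sup>2 / (4 * t)" using assms by simp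
    also have "\<dots> = t / 4 * (r - 1)\<^sup>2 + (r + 1)\<^sup>2 / (4 * t) - 1/2 * (\<bar>r - 1\<bar> * (r + 1))"
      using assms by (simp add: power2_eq_square field_simps)
    finally show ?thesis by simp
  qed
  finally show ?thesis by simp
qed

lemma (in prob_space) expectation_mult_sub_le_hellinger:
  fixes L h :: "'a \<Rightarrow> real"
  assumes L: "integrable M L" "\<And>x. 0 \<le> L x" "expectation L = 1" "integrable M (\<lambda>x. sqrt (L x))"
    and h: "h \<in> borel_measurable M" "\<And>x. 0 \<le> h x" "\<And>x. h x \<le> 1" and "0 < t"
  defines "B \<equiv> expectation (\<lambda>x. sqrt (L x))"
  shows "expectation (\<lambda>x. L x * h x) - expectation h \<le> t * (1 - B) / 2 + (1 + B) / (2 * t)"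
proof -
  define q where "q x = (L x - 1) / 2 + t / 4 * (sqrt (L x) - 1)\<^sup>2 + (sqrt (L x) + 1)\<^sup>2 / (4 * t)" for x
  have q_eq: "q x = (1/2 + t/4 + 1/(4*t)) * L x + (1/(2*t) - t/2) * sqrt (L x) + (t/4 + 1/(4*t) - 1/2)" for x
    using L(2)[of x] \<open>0 < t\<close> by (simp add: q_def power2_eq_square field_simps)
  have "L \<in> borel_measurable M" using L(1) by (rule borel_measurable_integrable)
  have "integrable M h" using h by (intro integrable_const_bound[where B=1]) auto
  moreover have "integrable M (\<lambda>x. L x * h x)"
    using L(1) by (rule Bochner_Integration.integrable_bound)
      (use h L(2) \<open>L \<in> borel_measurable M\<close> in \<open>auto simp: abs_mult intro!: mult_left_le\<close>)
  moreover have "integrable M q" unfolding q_eq using L by simp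
  ultimately have "expectation (\<lambda>x. L x * h x) - expectation h = expectation (\<lambda>x. h x * (L x - 1))"
    by (simp add: algebra_simps)
  also have "\<dots> \<le> expectation q"
  proof (rule integral_mono)
    show "integrable M (\<lambda>x. h x * (L x - 1))"
      using \<open>integrable M h\<close> \<open>integrable M (\<lambda>x. L x * h x)\<close> by (simp add: algebra_simps)
    show "h x * (L x - 1) \<le> q x" for x
      using bounded_mult_sq_sub_one_le[OF h(2)[of x] h(3)[of x] real_sqrt_ge_zero[OF L(2)[of x]] \<open>0 < t\<close>] L(2)[of x]
      by (simp add: q_def)
  qed fact
  also have "expectation q = t * (1 - B) / 2 + (1 + B) / (2 * t)"
    unfolding q_eq using L \<open>0 < t\<close> by (simp add: B_def prob_space field_simps)
  finally show ?thesis .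
qed

lemma sqrt_exp: "sqrt (exp x) = exp (x / 2)"
  by (rule real_sqrt_unique) (simp_all flip: exp_double)

lemma
  fixes \<delta> :: "'l::finite \<Rightarrow> real"
  assumes "0 < \<sigma>"
  shows integrable_gauss_likelihood_ratio: "integrable (gauss_noise \<sigma>) (gauss_likelihood_ratio \<sigma> \<delta>)"
    and integral_gauss_likelihood_ratio: "(\<integral>n. gauss_likelihood_ratio \<sigma> \<delta> n \<partial>gauss_noise \<sigma>) = 1"
proof -
  define S where "S = (\<Sum>i\<in>UNIV. (\<delta> i)\<^sup>2)"
  have L: "gauss_likelihood_ratio \<sigma> \<delta> n = exp (1 / \<sigma>\<^sup>2 * (\<Sum>i\<in>UNIV. \<delta> i * n i)) * exp (- S / (2 * \<sigma>\<^sup>2))" for n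
    unfolding gauss_likelihood_ratio_def exp_add[symmetric] S_def by (simp add: field_simps)
  show "integrable (gauss_noise \<sigma>) (gauss_likelihood_ratio \<sigma> \<delta>)"
    unfolding L by (intro integrable_mult_left integrable_gauss_noise_exp_linear assms)
  show "(\<integral>n. gauss_likelihood_ratio \<sigma> \<delta> n \<partial>gauss_noise \<sigma>) = 1"
    unfolding L integral_mult_left_zero integral_gauss_noise_exp_linear[OF assms] S_def[symmetric]
    using assms by (simp add: exp_add[symmetric] field_simps power2_eq_square)
qed

lemma
  fixes \<delta> :: "'l::finite \<Rightarrow> real"
  assumes "0 < \<sigma>"
  shows integrable_sqrt_gauss_likelihood_ratio:
      "integrable (gauss_noise \<sigma>) (\<lambda>n. sqrt (gauss_likelihood_ratio \<sigma> \<delta> n))"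
    and integral_sqrt_gauss_likelihood_ratio:
      "(\<integral>n. sqrt (gauss_likelihood_ratio \<sigma> \<delta> n) \<partial>gauss_noise \<sigma>) = exp (- (\<Sum>i\<in>UNIV. (\<delta> i)\<^sup>2) / (8 * \<sigma>\<^sup>2))"
proof -
  define S where "S = (\<Sum>i\<in>UNIV. (\<delta> i)\<^sup>2)"
  have R: "sqrt (gauss_likelihood_ratio \<sigma> \<delta> n)
      = exp (1 / (2 * \<sigma>\<^sup>2) * (\<Sum>i\<in>UNIV. \<delta> i * n i)) * exp (- S / (4 * \<sigma>\<^sup>2))" for n
    unfolding gauss_likelihood_ratio_def sqrt_exp exp_add[symmetric] S_def by (simp add: field_simps)
  show "integrable (gauss_noise \<sigma>) (\<lambda>n. sqrt (gauss_likelihood_ratio \<sigma> \<delta> n))"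
    unfolding R by (intro integrable_mult_left integrable_gauss_noise_exp_linear assms)
  show "(\<integral>n. sqrt (gauss_likelihood_ratio \<sigma> \<delta> n) \<partial>gauss_noise \<sigma>) = exp (- S / (8 * \<sigma>\<^sup>2))"
    unfolding R integral_mult_left_zero integral_gauss_noise_exp_linear[OF assms] S_def[symmetric]
    using assms by (simp add: exp_add[symmetric] field_simps power2_eq_square)
qed

lemma integral_gauss_noise_shift_le:
  fixes h :: "('l::finite \<Rightarrow> real) \<Rightarrow> real"
  assumes "0 < \<sigma>" and h: "h \<in> borel_measurable (gauss_noise \<sigma>)" "\<And>n. 0 \<le> h n" "\<And>n. h n \<le> 1"
  shows "(\<integral>n. h (\<lambda>i. n i + \<delta> i) \<partial>gauss_noise \<sigma>) \<le> (\<integral>n. h n \<partial>gauss_noise \<sigma>) + vnorm \<delta> / (2 * \<sigma>)"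
proof (cases "vnorm \<delta> = 0")
  case True
  then have "\<delta> = (\<lambda>_. 0)" by (simp add: vnorm_def sum_nonneg_eq_0_iff fun_eq_iff)
  then show ?thesis using True by simp
next
  case False
  interpret prob_space "gauss_noise \<sigma>" using assms(1) by (rule prob_space_gauss_noise)
  define c where "c = vnorm \<delta> / (2 * \<sigma>)"
  define B where "B = exp (- c\<^sup>2 / 2)"
  define t where "t = (1 + B) / c"
  have "0 \<le> vnorm \<delta>" unfolding vnorm_def by (simp add: sum_nonneg)
  then have "0 < c" unfolding c_def using False assms(1) by simp
  have "0 < 1 + B" by (simp add: B_def add_pos_pos)
  with \<open>0 < c\<close> have "0 < t" by (simp add: t_def)
  have B: "(\<integral>n. sqrt (gauss_likelihood_ratio \<sigma> \<delta> n) \<partial>gauss_noise \<sigma>) = B"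
    unfolding integral_sqrt_gauss_likelihood_ratio[OF assms(1)] B_def c_def vnorm_def
    using assms(1) by (simp add: power_divide power_mult_distrib sum_nonneg)
  have "(\<integral>n. h (\<lambda>i. n i + \<delta> i) \<partial>gauss_noise \<sigma>) - (\<integral>n. h n \<partial>gauss_noise \<sigma>)
      \<le> t * (1 - B) / 2 + (1 + B) / (2 * t)"
    unfolding integral_gauss_noise_shift[OF assms(1) h(1)] B[symmetric]
    using assms(1) h \<open>0 < t\<close>
    by (intro expectation_mult_sub_le_hellinger integrable_gauss_likelihood_ratio
        integral_gauss_likelihood_ratio integrable_sqrt_gauss_likelihood_ratio)
      (auto simp: gauss_likelihood_ratio_def)
  also have "\<dots> = (1 - B\<^sup>2) / (2 * c) + c / 2"
  proof -
    have "t * (1 - B) / 2 = (1 - B\<^sup>2) / (2 * c)"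
      unfolding t_def by (simp add: power2_eq_square algebra_simps)
    moreover have "(1 + B) / (2 * t) = c / 2"
      unfolding t_def using \<open>0 < c\<close> \<open>0 < 1 + B\<close> by (simp add: field_simps)
    ultimately show ?thesis by (simp only:)
  qed
  also have "\<dots> \<le> c"
  proof -
    have "1 - B\<^sup>2 \<le> c\<^sup>2"
      using exp_ge_add_one_self[of "- c\<^sup>2"] by (simp add: B_def flip: exp_double)
    then have "(1 - B\<^sup>2) / (2 * c) \<le> c / 2"
      using \<open>0 < c\<close> by (simp add: field_simps power2_eq_square)
    then show ?thesis by linarith
  qed
  finally show ?thesis unfolding c_def by simp
qed

section \<open>The permutation test\<close>

definition stab_relabelled :: "('l::finite \<Rightarrow> 'd::finite \<Rightarrow> real) \<Rightarrow> ('l \<Rightarrow> 'q::finite \<Rightarrow> real)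
    \<Rightarrow> (nat \<Rightarrow> 'q set) \<Rightarrow> nat \<Rightarrow> ('q \<Rightarrow> real) \<Rightarrow> ('l \<Rightarrow> real) \<Rightarrow> ('l \<Rightarrow> 'l) \<Rightarrow> real" where
  "stab_relabelled X W S m gh n \<rho> = stab (\<lambda>j. ols_beta X W (S j) (\<lambda>i. mat_vec W gh i + n (\<rho> i))) m"

lemma perm_pval_relabelled:
  "perm_pval X W S m gh M (\<lambda>i. mat_vec W gh i + n (\<rho> i)) pis
   = (real (card {i. i < M \<and> stab_relabelled X W S m gh n \<rho> \<le> stab_relabelled X W S m gh n (\<rho> \<circ> pis i)}) + 1)
     / (real M + 1)"
proof -
  have "perm_Y W gh (\<lambda>i. mat_vec W gh i + n (\<rho> i)) \<pi> = (\<lambda>i. mat_vec W gh i + n ((\<rho> \<circ> \<pi>) i))" for \<pi>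
    unfolding perm_Y_def by simp
  then show ?thesis unfolding perm_pval_def Let_def stab_relabelled_def by simp
qed

definition rejection_prob :: "('l::finite \<Rightarrow> 'd::finite \<Rightarrow> real) \<Rightarrow> ('l \<Rightarrow> 'q::finite \<Rightarrow> real)
    \<Rightarrow> (nat \<Rightarrow> 'q set) \<Rightarrow> nat \<Rightarrow> ('q \<Rightarrow> real) \<Rightarrow> nat \<Rightarrow> real \<Rightarrow> ('l \<Rightarrow> real) \<Rightarrow> real" where
  "rejection_prob X W S m gh M \<alpha> n =
     measure (perm_dist M) {pis \<in> space (perm_dist M). perm_pval X W S m gh M (\<lambda>i. mat_vec W gh i + n i) pis \<le> \<alpha>}"

lemma sum_rejection_prob_relabelled_le:
  fixes n :: "'l::finite \<Rightarrow> real"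
  assumes "0 < \<alpha>"
  shows "(\<Sum>\<tau>\<in>{\<tau>. \<tau> permutes UNIV}. rejection_prob X W S m gh M \<alpha> (n \<circ> \<tau>))
         \<le> \<alpha> * real (card {\<tau>::'l \<Rightarrow> 'l. \<tau> permutes UNIV})"
proof -
  define P where "P = {\<tau>::'l \<Rightarrow> 'l. \<tau> permutes UNIV}"
  define U where "U = stab_relabelled X W S m gh n"
  define K where "K = real (card P)"
  have "0 < K" unfolding K_def P_def by (simp add: card_gt_0_iff) (blast intro: permutes_id)
  have each: "rejection_prob X W S m gh M \<alpha> (n \<circ> \<tau>)
      = real (card {pis \<in> PiE {..<M} (\<lambda>_. P).
          real (card {i. i < M \<and> U \<tau> \<le> U (\<tau> \<circ> pis i)}) + 1 \<le> \<alpha> * (real M + 1)}) / K ^ M" for \<tau>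
  proof -
    have "{pis \<in> space (perm_dist M). perm_pval X W S m gh M (\<lambda>i. mat_vec W gh i + (n \<circ> \<tau>) i) pis \<le> \<alpha>}
          \<inter> PiE {..<M} (\<lambda>_. P)
        = {pis \<in> PiE {..<M} (\<lambda>_. P). real (card {i. i < M \<and> U \<tau> \<le> U (\<tau> \<circ> pis i)}) + 1 \<le> \<alpha> * (real M + 1)}"
      unfolding o_apply perm_pval_relabelled U_def
      by (auto simp: space_perm_dist PiE_iff extensional_def divide_le_eq add_pos_nonneg mult.commute)
    then show ?thesis
      unfolding rejection_prob_def K_def P_def by (subst measure_perm_dist) auto
  qed
  have "(real M + 1) * (\<Sum>\<tau>\<in>P. rejection_prob X W S m gh M \<alpha> (n \<circ> \<tau>))
      = (real M + 1) * (\<Sum>\<tau>\<in>P. real (card {pis \<in> PiE {..<M} (\<lambda>_. P).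
          real (card {i. i < M \<and> U \<tau> \<le> U (\<tau> \<circ> pis i)}) + 1 \<le> \<alpha> * (real M + 1)})) / K ^ M"
    by (simp only: each sum_divide_distrib flip: times_divide_eq_right)
  also have "\<dots> \<le> K ^ (M + 1) * (\<alpha> * (real M + 1)) / K ^ M"
    using \<open>0 < K\<close> assms unfolding K_def P_def
    by (intro divide_right_mono sum_card_relabelled_rank_le) auto
  also have "\<dots> = (real M + 1) * (\<alpha> * K)"
    using \<open>0 < K\<close> by (simp add: field_simps)
  finally show ?thesis unfolding P_def K_def by simp
qed

lemma
  assumes "finite_measure N" and A: "A \<in> sets (M \<Otimes>\<^sub>M N)"
  shows borel_measurable_measure_Pair: "(\<lambda>x. measure N (Pair x -` A)) \<in> borel_measurable M"
    and measure_pair_measure_eq_integral: "measure (M \<Otimes>\<^sub>M N) A = (\<integral>x. measure N (Pair x -` A) \<partial>M)"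
proof -
  interpret N: finite_measure N by fact
  have "(\<lambda>x. emeasure N (Pair x -` A)) \<in> borel_measurable M"
    using A by (rule N.measurable_emeasure_Pair)
  then show m: "(\<lambda>x. measure N (Pair x -` A)) \<in> borel_measurable M"
    by (simp add: N.emeasure_eq_measure)
  have "measure (M \<Otimes>\<^sub>M N) A = enn2real (\<integral>\<^sup>+ x. emeasure N (Pair x -` A) \<partial>M)"
    unfolding measure_def N.emeasure_pair_measure_alt[OF A] ..
  also have "\<dots> = (\<integral>x. measure N (Pair x -` A) \<partial>M)"
    using m by (intro enn2real_nn_integral_eq_integral) (auto simp: N.emeasure_eq_measure)
  finally show "measure (M \<Otimes>\<^sub>M N) A = (\<integral>x. measure N (Pair x -` A) \<partial>M)" .
qed

lemma integral_rejection_prob_le: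
  fixes X :: "'l::finite \<Rightarrow> 'd::finite \<Rightarrow> real" and W :: "'l \<Rightarrow> 'q::finite \<Rightarrow> real"
  assumes "0 < \<sigma>" "0 < \<alpha>"
    and g: "rejection_prob X W S m gh M \<alpha> \<in> borel_measurable (gauss_noise \<sigma>)"
  shows "(\<integral>n. rejection_prob X W S m gh M \<alpha> n \<partial>gauss_noise \<sigma>) \<le> \<alpha>"
proof -
  interpret G: prob_space "gauss_noise \<sigma> :: ('l \<Rightarrow> real) measure" using assms(1) by (rule prob_space_gauss_noise)
  interpret Pd: prob_space "perm_dist M :: (nat \<Rightarrow> 'l \<Rightarrow> 'l) measure" by (rule prob_space_perm_dist)
  define P where "P = {\<tau>::'l \<Rightarrow> 'l. \<tau> permutes UNIV}"
  define K where "K = real (card P)"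
  define g where "g = rejection_prob X W S m gh M \<alpha>"
  have "0 < K" unfolding K_def P_def by (simp add: card_gt_0_iff) (blast intro: permutes_id)
  have "integrable (gauss_noise \<sigma>) (\<lambda>n. g (n \<circ> \<tau>))" for \<tau> :: "'l \<Rightarrow> 'l"
  proof (rule G.integrable_const_bound[where B=1])
    show "AE n in gauss_noise \<sigma>. norm (g (n \<circ> \<tau>)) \<le> 1"
      by (simp add: g_def rejection_prob_def)
    show "(\<lambda>n. g (n \<circ> \<tau>)) \<in> borel_measurable (gauss_noise \<sigma>)"
      using measurable_comp[OF measurable_gauss_noise_permute g] by (simp add: g_def comp_def)
  qed
  have "K * (\<integral>n. g n \<partial>gauss_noise \<sigma>) = (\<Sum>\<tau>\<in>P. \<integral>n. g (n \<circ> \<tau>) \<partial>gauss_noise \<sigma>)"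
    using assms(1) g by (simp add: K_def P_def g_def integral_gauss_noise_permute)
  also have "\<dots> = (\<integral>n. (\<Sum>\<tau>\<in>P. g (n \<circ> \<tau>)) \<partial>gauss_noise \<sigma>)"
    using \<open>\<And>\<tau>. integrable _ (\<lambda>n. g (n \<circ> \<tau>))\<close> by (simp add: Bochner_Integration.integral_sum)
  also have "\<dots> \<le> (\<integral>_. \<alpha> * K \<partial>(gauss_noise \<sigma> :: ('l \<Rightarrow> real) measure))"
  proof (rule Bochner_Integration.integral_mono)
    show "integrable (gauss_noise \<sigma>) (\<lambda>n. \<Sum>\<tau>\<in>P. g (n \<circ> \<tau>))"
      using \<open>\<And>\<tau>. integrable _ (\<lambda>n. g (n \<circ> \<tau>))\<close> by simp
    show "(\<Sum>\<tau>\<in>P. g (n \<circ> \<tau>)) \<le> \<alpha> * K" for n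
      using sum_rejection_prob_relabelled_le[OF assms(2)] by (simp add: g_def P_def K_def)
  qed simp
  finally show ?thesis using \<open>0 < K\<close> by (simp add: g_def G.prob_space mult.commute)
qed

lemma measure_rejection_shifted_le:
  fixes X :: "'l::finite \<Rightarrow> 'd::finite \<Rightarrow> real" and W :: "'l \<Rightarrow> 'q::finite \<Rightarrow> real"
  assumes "0 < \<sigma>" "0 < \<alpha>"
  shows "measure (gauss_noise \<sigma> \<Otimes>\<^sub>M perm_dist M)
           {(N, pis). N \<in> space (gauss_noise \<sigma>) \<and> pis \<in> space (perm_dist M) \<and>
              perm_pval X W S m gh M (\<lambda>i. mat_vec W gh i + (N i + \<delta> i)) pis \<le> \<alpha>}
         \<le> \<alpha> + vnorm \<delta> / (2 * \<sigma>)"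
    (is "measure ?M ?A \<le> _")
proof -
  interpret Pd: prob_space "perm_dist M :: (nat \<Rightarrow> 'l \<Rightarrow> 'l) measure" by (rule prob_space_perm_dist)
  define g where "g = rejection_prob X W S m gh M \<alpha>"
  have "0 \<le> vnorm \<delta> / (2 * \<sigma>)" using assms(1) by (simp add: vnorm_def sum_nonneg)
  show ?thesis
  proof (cases "?A \<in> sets ?M")
    case False
    then show ?thesis using \<open>0 \<le> vnorm \<delta> / (2 * \<sigma>)\<close> assms(2) by (simp add: measure_notin_sets)
  next
    case True
    have slice: "measure (perm_dist M) (Pair N -` ?A) = g (\<lambda>i. N i + \<delta> i)" for N
      by (simp add: g_def rejection_prob_def space_gauss_noise vimage_def)
    have "(\<lambda>N. g (\<lambda>i. N i + \<delta> i)) \<in> borel_measurable (gauss_noise \<sigma>)"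
      using borel_measurable_measure_Pair[OF Pd.finite_measure_axioms True] unfolding slice .
    from measurable_comp[OF measurable_gauss_noise_shift[of "\<lambda>i. - \<delta> i"] this]
    have "g \<in> borel_measurable (gauss_noise \<sigma>)" by (simp add: comp_def)
    have "measure ?M ?A = (\<integral>N. g (\<lambda>i. N i + \<delta> i) \<partial>gauss_noise \<sigma>)"
      unfolding measure_pair_measure_eq_integral[OF Pd.finite_measure_axioms True] slice ..
    also have "\<dots> \<le> (\<integral>n. g n \<partial>gauss_noise \<sigma>) + vnorm \<delta> / (2 * \<sigma>)"
      using assms(1) \<open>g \<in> borel_measurable _\<close>
      by (rule integral_gauss_noise_shift_le) (simp_all add: g_def rejection_prob_def)
    also have "(\<integral>n. g n \<partial>gauss_noise \<sigma>) \<le> \<alpha>"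
      unfolding g_def using assms \<open>g \<in> borel_measurable _\<close> by (intro integral_rejection_prob_le) (simp_all add: g_def)
    finally show ?thesis by simp
  qed
qed

lemma perm_pval_no_permutations: "perm_pval X W S m gh 0 Y pis = 1"
  by (simp add: perm_pval_def Let_def)

theorem theorem2:
  fixes X :: "'l::finite \<Rightarrow> 'd::finite \<Rightarrow> real"
    and W :: "'l \<Rightarrow> 'q::finite \<Rightarrow> real"
    and \<gamma> \<gamma>h :: "'q \<Rightarrow> real"
    and S :: "nat \<Rightarrow> 'q set"
    and m M :: nat
    and \<sigma> \<alpha> :: real
  assumes "\<sigma> > 0" and "0 < \<alpha>" and "\<alpha> < 1"
  shows "measure (gauss_noise \<sigma> \<Otimes>\<^sub>M perm_dist M)
           {(N, pis). N \<in> space (gauss_noise \<sigma>) \<and> pis \<in> space (perm_dist M) \<and>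
              perm_pval X W S m \<gamma>h M (\<lambda>i. mat_vec W \<gamma> i + N i) pis \<le> \<alpha>}
         \<le> \<alpha> + sqrt (real M) * vnorm (mat_vec W (\<lambda>k. \<gamma> k - \<gamma>h k)) / (2 * \<sigma>)"
proof (cases "M = 0")
  case True
  then show ?thesis using assms by (simp add: perm_pval_no_permutations vnorm_def sum_nonneg)
next
  case False
  define \<delta> where "\<delta> = mat_vec W (\<lambda>k. \<gamma> k - \<gamma>h k)"
  have residual: "(\<lambda>i. mat_vec W \<gamma> i + N i) = (\<lambda>i. mat_vec W \<gamma>h i + (N i + \<delta> i))" for N
    unfolding \<delta>_def mat_vec_def by (simp add: sum_subtractf right_diff_distrib add.commute)
  have "measure (gauss_noise \<sigma> \<Otimes>\<^sub>M perm_dist M)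
           {(N, pis). N \<in> space (gauss_noise \<sigma>) \<and> pis \<in> space (perm_dist M) \<and>
              perm_pval X W S m \<gamma>h M (\<lambda>i. mat_vec W \<gamma> i + N i) pis \<le> \<alpha>}
         \<le> \<alpha> + vnorm \<delta> / (2 * \<sigma>)"
    unfolding residual by (rule measure_rejection_shifted_le[OF assms(1,2)])
  also have "vnorm \<delta> / (2 * \<sigma>) \<le> sqrt (real M) * vnorm \<delta> / (2 * \<sigma>)"
  proof -
    have "1 \<le> sqrt (real M)" "0 \<le> vnorm \<delta> / (2 * \<sigma>)"
      using False assms(1) by (simp_all add: vnorm_def sum_nonneg)
    then show ?thesis using mult_right_mono[of 1 "sqrt (real M)" "vnorm \<delta> / (2 * \<sigma>)"] by simp
  qed
  finally show ?thesis unfolding \<delta>_def by simp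
qed

end
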